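(* Let $G=(V,E)$ be a claw-free graph and $I$ a maximum cardinality independent set of $G$. Let $a\in I$ and let $v\in V_a$ be a vertex belonging to a cluster $C$. Then $N[v]\setminus N[a]=C\setminus V_a$.
   Context: Graphs are finite, simple, undirected; claw-free means no induced $K_{1,3}$. For $a\ne b$ in $I$, $V_{a,b}=\{v\in V\setminus I: N(v)\cap I=\{a,b\}\}$ ($2$-packs), and for $a\in I$, $V_a=\{v\in V\setminus I : N(v)\cap I=\{a\}\}$ ($1$-packs). $\mathtt{T2}^a$ is the set of vertices $v\in V_a$ that have neighbours in at least two distinct $1$-packs other than $V_a$; $\mathtt{T2}=\bigcup_{a\in I}\mathtt{T2}^a$. $G_{\mathtt{T2}}$ is the graph on vertex set $\mathtt{T2}$ whose edges are the edges of $G[\mathtt{T2}]$ with endpoints in different $1$-packs. A cluster is the vertex set of a connected component of $G_{\mathtt{T2}}$. *)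

theory Defs
  imports Main
begin

definition graph :: "'a set \<Rightarrow> ('a \<Rightarrow> 'a \<Rightarrow> bool) \<Rightarrow> bool" where
  "graph V E \<longleftrightarrow> finite V \<and> (\<forall>x y. E x y \<longrightarrow> x \<in> V \<and> y \<in> V)
     \<and> (\<forall>x y. E x y \<longrightarrow> E y x) \<and> (\<forall>x. \<not> E x x)"

definition nbhd :: "'a set \<Rightarrow> ('a \<Rightarrow> 'a \<Rightarrow> bool) \<Rightarrow> 'a \<Rightarrow> 'a set" where
  "nbhd V E v = {u \<in> V. E v u}"

definition cnbhd :: "'a set \<Rightarrow> ('a \<Rightarrow> 'a \<Rightarrow> bool) \<Rightarrow> 'a \<Rightarrow> 'a set" where
  "cnbhd V E v = insert v (nbhd V E v)"

definition claw_free :: "'a set \<Rightarrow> ('a \<Rightarrow> 'a \<Rightarrow> bool) \<Rightarrow> bool" where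
  "claw_free V E \<longleftrightarrow> \<not> (\<exists>c\<in>V. \<exists>x\<in>V. \<exists>y\<in>V. \<exists>z\<in>V.
      E c x \<and> E c y \<and> E c z \<and> x \<noteq> y \<and> x \<noteq> z \<and> y \<noteq> z
      \<and> \<not> E x y \<and> \<not> E x z \<and> \<not> E y z)"

definition independent :: "'a set \<Rightarrow> ('a \<Rightarrow> 'a \<Rightarrow> bool) \<Rightarrow> 'a set \<Rightarrow> bool" where
  "independent V E I \<longleftrightarrow> I \<subseteq> V \<and> (\<forall>x\<in>I. \<forall>y\<in>I. \<not> E x y)"

definition max_independent :: "'a set \<Rightarrow> ('a \<Rightarrow> 'a \<Rightarrow> bool) \<Rightarrow> 'a set \<Rightarrow> bool" where
  "max_independent V E I \<longleftrightarrow> independent V E I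
     \<and> (\<forall>J. independent V E J \<longrightarrow> card J \<le> card I)"

definition one_pack :: "'a set \<Rightarrow> ('a \<Rightarrow> 'a \<Rightarrow> bool) \<Rightarrow> 'a set \<Rightarrow> 'a \<Rightarrow> 'a set" where
  "one_pack V E I a = {v \<in> V - I. nbhd V E v \<inter> I = {a}}"

definition T2a :: "'a set \<Rightarrow> ('a \<Rightarrow> 'a \<Rightarrow> bool) \<Rightarrow> 'a set \<Rightarrow> 'a \<Rightarrow> 'a set" where
  "T2a V E I a = {v \<in> one_pack V E I a. \<exists>b\<in>I. \<exists>c\<in>I. b \<noteq> c \<and> b \<noteq> a \<and> c \<noteq> a
      \<and> (\<exists>x\<in>one_pack V E I b. E v x) \<and> (\<exists>y\<in>one_pack V E I c. E v y)}"

definition T2 :: "'a set \<Rightarrow> ('a \<Rightarrow> 'a \<Rightarrow> bool) \<Rightarrow> 'a set \<Rightarrow> 'a set" where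
  "T2 V E I = (\<Union>a\<in>I. T2a V E I a)"

definition ET2 :: "'a set \<Rightarrow> ('a \<Rightarrow> 'a \<Rightarrow> bool) \<Rightarrow> 'a set \<Rightarrow> 'a \<Rightarrow> 'a \<Rightarrow> bool" where
  "ET2 V E I x y \<longleftrightarrow> x \<in> T2 V E I \<and> y \<in> T2 V E I \<and> E x y
     \<and> \<not> (\<exists>a\<in>I. x \<in> one_pack V E I a \<and> y \<in> one_pack V E I a)"

definition cluster :: "'a set \<Rightarrow> ('a \<Rightarrow> 'a \<Rightarrow> bool) \<Rightarrow> 'a set \<Rightarrow> 'a set \<Rightarrow> bool" where
  "cluster V E I C \<longleftrightarrow> (\<exists>x\<in>T2 V E I. C = {y. (ET2 V E I)\<^sup>*\<^sup>* x y})"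

end

theory Submission
  imports Defs
begin

text \<open>
  For a vertex \<open>w\<close> of the 1-pack \<open>V\<^sub>p\<close>, call \<open>N(w) \ N[p]\<close> its private neighbourhood.
  By claw-freeness (a claw centred at \<open>w\<close> with leaf \<open>p\<close>) it is a clique, and by maximality
  of \<open>I\<close> (a further claw) each of its vertices lies in a 1-pack \<open>V\<^sub>q\<close>, \<open>q \<noteq> p\<close>. Moving along
  an edge from \<open>w \<in> V\<^sub>p\<close> to \<open>u \<in> V\<^sub>q\<close> of this clique leaves the private neighbourhood
  unchanged outside \<open>V\<^sub>p \<union> V\<^sub>q\<close>; for vertices of \<open>T2\<close> one more claw argument shows that
  two vertices of \<open>T2\<^sup>a\<close> agreeing outside one other 1-pack agree everywhere. Hence along
  every path of \<open>G\<^sub>T\<^sub>2\<close> starting at \<open>v \<in> T2\<^sup>a\<close> one either stays inside the private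
  neighbourhood of \<open>v\<close> or sits in \<open>V\<^sub>a\<close> with the same private neighbourhood as \<open>v\<close>, so the
  cluster of \<open>v\<close> minus \<open>V\<^sub>a\<close> is exactly that private neighbourhood.
\<close>

definition private_nbhd :: "('a \<Rightarrow> 'a \<Rightarrow> bool) \<Rightarrow> 'a \<Rightarrow> 'a \<Rightarrow> 'a set" where
  "private_nbhd E w p = {u. E w u \<and> u \<noteq> p \<and> \<not> E p u}"

lemma cnbhd_diff_eq_private_nbhd:
  assumes "graph V E" "E p w"
  shows "cnbhd V E w - cnbhd V E p = private_nbhd E w p"
  using assms unfolding graph_def cnbhd_def nbhd_def private_nbhd_def by auto

lemma symp_rtranclp_component_eq:
  assumes "symp R" "R\<^sup>*\<^sup>* x v"
  shows "{y. R\<^sup>*\<^sup>* x y} = {y. R\<^sup>*\<^sup>* v y}"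
  using assms by (metis rtranclp_trans sympD symp_rtranclp)

locale claw_free_max_independent =
  fixes V :: "'a set" and E :: "'a \<Rightarrow> 'a \<Rightarrow> bool" and I :: "'a set"
  assumes graph: "graph V E"
    and claw_free: "claw_free V E"
    and max_independent: "max_independent V E I"
begin

lemma edge_sym: "E x y \<Longrightarrow> E y x"
  using graph unfolding graph_def by blast

lemma edge_in_V: "E x y \<Longrightarrow> x \<in> V" "E x y \<Longrightarrow> y \<in> V"
  using graph unfolding graph_def by blast+

lemma no_loop: "\<not> E x x"
  using graph unfolding graph_def by blast

lemma independent_I: "independent V E I"
  using max_independent unfolding max_independent_def by blast

lemma I_no_edge: "x \<in> I \<Longrightarrow> y \<in> I \<Longrightarrow> \<not> E x y"
  using independent_I unfolding independent_def by blast

lemma no_claw: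
  assumes "E c x" "E c y" "E c z" "x \<noteq> y" "x \<noteq> z" "y \<noteq> z" "\<not> E x y" "\<not> E x z" "\<not> E y z"
  shows False
  using claw_free assms edge_in_V unfolding claw_free_def by blast

lemma one_pack_iff:
  "v \<in> one_pack V E I p \<longleftrightarrow>
     v \<in> V \<and> v \<notin> I \<and> p \<in> I \<and> E v p \<and> (\<forall>q\<in>I. E v q \<longrightarrow> q = p)"
  using independent_I edge_in_V unfolding one_pack_def nbhd_def independent_def by blast

lemma one_packD:
  assumes "v \<in> one_pack V E I p"
  shows "v \<notin> I" "p \<in> I" "E v p" "E p v"
    "\<And>q. q \<in> I \<Longrightarrow> q \<noteq> p \<Longrightarrow> \<not> E v q" "\<And>q. q \<in> I \<Longrightarrow> q \<noteq> p \<Longrightarrow> \<not> E q v"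
  using assms edge_sym[of v p] edge_sym[of _ v] unfolding one_pack_iff by blast+

lemma one_pack_unique: "v \<in> one_pack V E I p \<Longrightarrow> v \<in> one_pack V E I q \<Longrightarrow> p = q"
  unfolding one_pack_iff by blast

lemma T2a_one_pack: "w \<in> T2a V E I p \<Longrightarrow> w \<in> one_pack V E I p"
  unfolding T2a_def by blast

lemma T2_iff_T2a: "v \<in> one_pack V E I p \<Longrightarrow> v \<in> T2 V E I \<longleftrightarrow> v \<in> T2a V E I p"
  unfolding T2_def by (metis UN_iff T2a_one_pack one_pack_unique one_packD(2))

lemma T2aE:
  assumes "w \<in> T2a V E I p"
  obtains b c x y where "b \<in> I" "c \<in> I" "b \<noteq> c" "b \<noteq> p" "c \<noteq> p"
    "x \<in> one_pack V E I b" "E w x" "y \<in> one_pack V E I c" "E w y"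
  using assms unfolding T2a_def by blast

lemma private_nbhdI:
  "E w x \<Longrightarrow> x \<in> one_pack V E I b \<Longrightarrow> p \<in> I \<Longrightarrow> p \<noteq> b \<Longrightarrow> x \<in> private_nbhd E w p"
  unfolding private_nbhd_def using one_packD(1,6) by blast

lemma private_nbhd_disjoint_one_pack:
  "x \<in> private_nbhd E w p \<Longrightarrow> x \<notin> one_pack V E I p"
  unfolding private_nbhd_def using one_packD(4) by blast

lemma private_nbhd_clique:
  assumes "w \<in> one_pack V E I p" "x \<in> private_nbhd E w p" "y \<in> private_nbhd E w p" "x \<noteq> y"
  shows "E x y"
  using no_claw[of w p x y] one_packD(3)[OF assms(1)] assms(2-4)
  unfolding private_nbhd_def by blast

lemma private_nbhd_one_pack:
  assumes "w \<in> one_pack V E I p" "u \<in> private_nbhd E w p"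
  obtains q where "q \<in> I" "q \<noteq> p" "u \<in> one_pack V E I q"
proof -
  have u: "E w u" "u \<noteq> p" "\<not> E p u"
    using assms(2) unfolding private_nbhd_def by auto
  have uI: "u \<notin> I"
    using one_packD(5)[OF assms(1)] u(1,2) by blast
  have "\<exists>q\<in>I. E u q"
  proof (rule ccontr)
    assume "\<not> (\<exists>q\<in>I. E u q)"
    then have "independent V E (insert u I)"
      using independent_I edge_in_V(2)[OF u(1)] no_loop[of u] edge_sym[of _ u]
      unfolding independent_def by blast
    then have "card (insert u I) \<le> card I"
      using max_independent unfolding max_independent_def by blast
    moreover have "finite I"
      using graph independent_I finite_subset unfolding graph_def independent_def by blast
    ultimately show False using uI by simp
  qed
  then obtain q where q: "q \<in> I" "E u q" by blast
  have qp: "q \<noteq> p" using q(2) u(3) edge_sym by blast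
  have "q' = q" if q': "q' \<in> I" "E u q'" for q'
  proof (rule ccontr)
    assume "q' \<noteq> q"
    \<comment> \<open>otherwise \<open>u\<close> is the centre of a claw with leaves \<open>w\<close>, \<open>q\<close>, \<open>q'\<close>\<close>
    moreover have "q' \<noteq> p" using q'(2) u(3) edge_sym by blast
    moreover have "w \<noteq> q" "w \<noteq> q'" using one_packD(1)[OF assms(1)] q(1) q'(1) by blast+
    ultimately show False
      using no_claw[of u w q q'] edge_sym[OF u(1)] q q' qp
        one_packD(5)[OF assms(1)] I_no_edge[OF q(1) q'(1)] by blast
  qed
  then have "u \<in> one_pack V E I q"
    unfolding one_pack_iff using edge_in_V(2)[OF u(1)] uI q by blast
  then show thesis using that q(1) qp by blast
qed

lemma private_nbhd_subset_T2:
  assumes "w \<in> T2a V E I p" "u \<in> private_nbhd E w p"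
  shows "u \<in> T2 V E I"
proof -
  have wp: "w \<in> one_pack V E I p" using T2a_one_pack[OF assms(1)] .
  have pI: "p \<in> I" using one_packD(2)[OF wp] .
  obtain d where d: "d \<in> I" "d \<noteq> p" "u \<in> one_pack V E I d"
    using private_nbhd_one_pack[OF wp assms(2)] by blast
  obtain b c x y where bc: "b \<in> I" "c \<in> I" "b \<noteq> c" "b \<noteq> p" "c \<noteq> p"
    "x \<in> one_pack V E I b" "E w x" "y \<in> one_pack V E I c" "E w y"
    using T2aE[OF assms(1)] by blast
  have uw: "E u w" using assms(2) edge_sym unfolding private_nbhd_def by blast
  \<comment> \<open>besides \<open>V\<^sub>p\<close> (through \<open>w\<close>), \<open>u\<close> sees whichever of \<open>V\<^sub>b\<close>, \<open>V\<^sub>c\<close> is not \<open>V\<^sub>d\<close>,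
    as the private neighbourhood is a clique\<close>
  obtain e t where et: "e \<in> I" "e \<noteq> p" "e \<noteq> d" "t \<in> one_pack V E I e" "E u t"
  proof (cases "d = b")
    case True
    then have "y \<noteq> u" using d(3) bc(3,8) one_pack_unique by blast
    then have "E u y"
      using private_nbhd_clique[OF wp assms(2)] private_nbhdI[OF bc(9,8) pI] bc(5) by blast
    then show thesis using that bc(2,3,5,8) True by blast
  next
    case False
    then have "x \<noteq> u" using d(3) bc(6) one_pack_unique by blast
    then have "E u x"
      using private_nbhd_clique[OF wp assms(2)] private_nbhdI[OF bc(7,6) pI] bc(4) by blast
    then show thesis using that bc(1,4,6) False by blast
  qed
  have "u \<in> T2a V E I d"
    unfolding T2a_def using d et wp uw pI by blast
  then show ?thesis unfolding T2_def using d(1) by blast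
qed

lemma private_nbhd_swap:
  assumes "w \<in> one_pack V E I p" "u \<in> private_nbhd E w p" "u \<in> one_pack V E I q"
  shows "private_nbhd E w p - one_pack V E I q = private_nbhd E u q - one_pack V E I p"
proof -
  have pq: "p \<noteq> q"
    using assms(2) one_packD(4)[OF assms(3)] unfolding private_nbhd_def by blast
  have wS: "w \<in> private_nbhd E u q"
    using private_nbhdI[OF _ assms(1) one_packD(2)[OF assms(3)]] assms(2) edge_sym pq
    unfolding private_nbhd_def by blast
  have move: "x \<in> private_nbhd E u' q'"
    if hyps: "w' \<in> one_pack V E I p'" "u' \<in> private_nbhd E w' p'" "u' \<in> one_pack V E I q'"
      "x \<in> private_nbhd E w' p'" "x \<notin> one_pack V E I q'" for w' p' u' q' x
  proof -
    obtain r where r: "x \<in> one_pack V E I r"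
      using private_nbhd_one_pack[OF hyps(1,4)] by blast
    have "E u' x" using private_nbhd_clique[OF hyps(1,2,4)] hyps(3,5) by blast
    moreover have "r \<noteq> q'" using r hyps(5) by blast
    ultimately show ?thesis
      using private_nbhdI[OF _ r one_packD(2)[OF hyps(3)]] by blast
  qed
  show ?thesis
  proof
    show "private_nbhd E w p - one_pack V E I q \<subseteq> private_nbhd E u q - one_pack V E I p"
      using move[OF assms] private_nbhd_disjoint_one_pack[of _ w p] by blast
    show "private_nbhd E u q - one_pack V E I p \<subseteq> private_nbhd E w p - one_pack V E I q"
      using move[OF assms(3) wS assms(1)] private_nbhd_disjoint_one_pack[of _ u q] by blast
  qed
qed

lemma private_nbhd_agree_on_one_pack:
  assumes "v \<in> one_pack V E I a" "z \<in> T2a V E I a"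
    "private_nbhd E v a - one_pack V E I d = private_nbhd E z a - one_pack V E I d"
    "u \<in> private_nbhd E v a" "u \<in> one_pack V E I d"
  shows "u \<in> private_nbhd E z a"
proof -
  have za: "z \<in> one_pack V E I a" using T2a_one_pack[OF assms(2)] .
  have aI: "a \<in> I" using one_packD(2)[OF za] .
  have da: "d \<noteq> a"
    using assms(4) one_packD(4)[OF assms(5)] unfolding private_nbhd_def by blast
  obtain b c x y where bc: "b \<in> I" "c \<in> I" "b \<noteq> c" "b \<noteq> a" "c \<noteq> a"
    "x \<in> one_pack V E I b" "E z x" "y \<in> one_pack V E I c" "E z y"
    using T2aE[OF assms(2)] by blast
  obtain e t where et: "e \<in> I" "e \<noteq> a" "e \<noteq> d" "t \<in> one_pack V E I e" "E z t"
    using bc by metis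
  have "t \<in> private_nbhd E z a" "t \<notin> one_pack V E I d"
    using private_nbhdI[OF et(5,4) aI] et(2,3,4) one_pack_unique by blast+
  then have "t \<in> private_nbhd E v a" using assms(3) by blast
  then have tu: "E t u"
    using private_nbhd_clique[OF assms(1) _ assms(4)] et(3,4) assms(5) one_pack_unique by blast
  have "E z u"
  proof (rule ccontr)
    assume "\<not> E z u"
    \<comment> \<open>then \<open>t\<close> is the centre of a claw with leaves \<open>e\<close>, \<open>z\<close>, \<open>u\<close>\<close>
    moreover have "z \<noteq> u" using za assms(5) one_pack_unique da by blast
    ultimately show False
      using no_claw[of t e z u] tu et one_packD[OF za] one_packD[OF assms(5)]
        one_packD(3)[OF et(4)] edge_sym by metis
  qed
  then show ?thesis using assms(4) unfolding private_nbhd_def by blast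
qed

lemma private_nbhd_eq_if_agree_off_one_pack:
  assumes "v \<in> T2a V E I a" "z \<in> T2a V E I a"
    "private_nbhd E v a - one_pack V E I d = private_nbhd E z a - one_pack V E I d"
  shows "private_nbhd E z a = private_nbhd E v a"
  using private_nbhd_agree_on_one_pack[OF T2a_one_pack[OF assms(1)] assms(2,3)]
    private_nbhd_agree_on_one_pack[OF T2a_one_pack[OF assms(2)] assms(1) assms(3)[symmetric]]
    assms(3)
  by blast

lemma ET2_path_private_nbhd:
  assumes "v \<in> T2a V E I a" "(ET2 V E I)\<^sup>*\<^sup>* v w"
  shows "w \<in> private_nbhd E v a \<or>
    (w \<in> one_pack V E I a \<and> private_nbhd E w a = private_nbhd E v a)"
  using assms(2)
proof (induction rule: rtranclp_induct)
  case base
  then show ?case using T2a_one_pack[OF assms(1)] by blast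
next
  case (step w z)
  have zw: "z \<in> T2 V E I" "E w z" "\<not> (\<exists>a\<in>I. w \<in> one_pack V E I a \<and> z \<in> one_pack V E I a)"
    using step(2) unfolding ET2_def by auto
  obtain e where e: "e \<in> I" "z \<in> one_pack V E I e"
    using zw(1) unfolding T2_def T2a_def by blast
  have va: "v \<in> one_pack V E I a" using T2a_one_pack[OF assms(1)] .
  have aI: "a \<in> I" using one_packD(2)[OF va] .
  from step(3) show ?case
  proof
    assume "w \<in> one_pack V E I a \<and> private_nbhd E w a = private_nbhd E v a"
    then show ?case using private_nbhdI[OF zw(2) e(2) aI] zw(3) e by blast
  next
    assume w: "w \<in> private_nbhd E v a"
    obtain d where d: "d \<in> I" "d \<noteq> a" "w \<in> one_pack V E I d"
      using private_nbhd_one_pack[OF va w] by blast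
    have zS: "z \<in> private_nbhd E w d"
      using private_nbhdI[OF zw(2) e(2) d(1)] zw(3) e d by blast
    have eq1: "private_nbhd E v a - one_pack V E I d = private_nbhd E w d - one_pack V E I a"
      using private_nbhd_swap[OF va w d(3)] .
    show ?case
    proof (cases "e = a")
      case False
      then show ?thesis using zS eq1 e(2) one_pack_unique by blast
    next
      case True
      then have za: "z \<in> one_pack V E I a" using e by simp
      have "private_nbhd E v a - one_pack V E I d = private_nbhd E z a - one_pack V E I d"
        using eq1 private_nbhd_swap[OF d(3) zS za] by simp
      then show ?thesis
        using private_nbhd_eq_if_agree_off_one_pack[OF assms(1)] zw(1) za T2_iff_T2a by blast
    qed
  qed
qed

lemma ET2_component_eq_private_nbhd:
  assumes "v \<in> T2a V E I a"
  shows "{y. (ET2 V E I)\<^sup>*\<^sup>* v y} - one_pack V E I a = private_nbhd E v a"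
proof
  have va: "v \<in> one_pack V E I a" using T2a_one_pack[OF assms] .
  show "private_nbhd E v a \<subseteq> {y. (ET2 V E I)\<^sup>*\<^sup>* v y} - one_pack V E I a"
  proof
    fix u assume u: "u \<in> private_nbhd E v a"
    obtain q where q: "q \<noteq> a" "u \<in> one_pack V E I q"
      using private_nbhd_one_pack[OF va u] by blast
    have "\<not> (\<exists>b\<in>I. v \<in> one_pack V E I b \<and> u \<in> one_pack V E I b)"
      using one_pack_unique va q by blast
    moreover have "E v u" using u unfolding private_nbhd_def by blast
    ultimately have "ET2 V E I v u"
      unfolding ET2_def
      using private_nbhd_subset_T2[OF assms u] T2_iff_T2a[OF va] assms by blast
    then show "u \<in> {y. (ET2 V E I)\<^sup>*\<^sup>* v y} - one_pack V E I a"
      using private_nbhd_disjoint_one_pack[OF u] by auto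
  qed
  show "{y. (ET2 V E I)\<^sup>*\<^sup>* v y} - one_pack V E I a \<subseteq> private_nbhd E v a"
    using ET2_path_private_nbhd[OF assms] by blast
qed

lemma symp_ET2: "symp (ET2 V E I)"
  unfolding ET2_def by (blast intro: sympI edge_sym)

lemma cluster_subset_T2:
  assumes "cluster V E I C" "v \<in> C"
  shows "v \<in> T2 V E I"
  using assms unfolding cluster_def by (metis ET2_def mem_Collect_eq rtranclp.cases)

end

theorem corollary1:
  assumes "graph V E"
    and "claw_free V E"
    and "max_independent V E I"
    and "a \<in> I"
    and "v \<in> one_pack V E I a"
    and "cluster V E I C"
    and "v \<in> C"
  shows "cnbhd V E v - cnbhd V E a = C - one_pack V E I a"
proof -
  interpret claw_free_max_independent V E I
    using assms(1-3) by unfold_locales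
  obtain x where "C = {y. (ET2 V E I)\<^sup>*\<^sup>* x y}"
    using assms(6) unfolding cluster_def by blast
  then have C: "C = {y. (ET2 V E I)\<^sup>*\<^sup>* v y}"
    using symp_rtranclp_component_eq[OF symp_ET2] assms(7) by blast
  have "v \<in> T2a V E I a"
    using cluster_subset_T2[OF assms(6,7)] T2_iff_T2a[OF assms(5)] by blast
  then have "C - one_pack V E I a = private_nbhd E v a"
    unfolding C by (rule ET2_component_eq_private_nbhd)
  then show ?thesis
    using cnbhd_diff_eq_private_nbhd[OF assms(1) one_packD(4)[OF assms(5)]] by simp
qed

end
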